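(* There is a one-to-one correspondence between triples of lifted partial permutations of the form $(\tilde S,\tilde f)$, $(\tilde T,\tilde g)$, $(\tilde S,\tilde g\circ\tilde f)$ with $\tilde T=\tilde f(\tilde S)$, and triangularly connected triples of Heegaard states $\mathbf x\in\mathfrak S(\mathcal H_{\alpha\beta})$, $\mathbf y\in\mathfrak S(\mathcal H_{\beta\gamma})$, $\mathbf z\in\mathfrak S(\mathcal H_{\alpha\gamma})$ (where $\mathbf x,\mathbf y,\mathbf z$ correspond to $\tilde f$, $\tilde g$, $\tilde g\circ\tilde f$ respectively). Moreover, if $\psi\in D(\mathbf x,\mathbf y,\mathbf z)$ is the domain connecting them, then for each $i=1,\dots,m$, $$w_i(\tilde f)+w_i(\tilde g)=w_i(\tilde g\circ\tilde f)+n_{O_i}(\psi),$$ where $n_{O_i}(\psi)$ is the local multiplicity of $\psi$ at $O_i$.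
   Context: Fix $0<k<m$. $G_m$ is the group of isometries of $\mathbb R$ generated by $x\mapsto1-x$, $x\mapsto2m-1-x$; $Q_2(j-\frac12)$ is the unique $i\in\{1,\dots,m\}$ with $i\equiv j$ or $i\equiv 2-j\pmod{2m-2}$. A lifted partial permutation on $k$ letters is a pair $(\tilde S,\tilde f)$ with $\tilde S\subset\mathbb Z$ $G_m$-invariant, $|\tilde S/G_m|=k$, $\tilde f:\tilde S\to\mathbb Z$ $G_m$-equivariant with injective induced map $\tilde S/G_m\to\mathbb Z/G_m$; $w_j(\tilde f)=\tfrac12\#\{i\in\tilde S: i<j-\tfrac12<\tilde f(i)\text{ or } i>j-\tfrac12>\tilde f(i)\}$. Heegaard triple: in $\mathbb R^2$ with punctures $O_{Q_2(i+1/2)}$ at $(i+\frac12,i+\frac12)$ and $\mathbb G_m$ generated by the $180^\circ$ rotations about $(\frac12,\frac12)$ and $(m-\frac12,m-\frac12)$, take lines $\tilde\alpha_\ell=\{\ell\}\times\mathbb R$, $\tilde\gamma_\ell=\mathbb R\times\{\ell\}$, and a $\mathbb G_m$-invariant family of lines $\tilde\beta_\ell$ ($\ell\in\mathbb Z$) of slope $-1$, with $\tilde\beta_\ell$ crossing the diagonal between $(\ell-\frac12,\ell-\frac12)$ and $(\ell+\frac12,\ell+\frac12)$, and no triple intersection among an $\tilde\alpha$-line, a $\tilde\beta$-line and the diagonal. $\mathcal H=\mathbb R^2/\mathbb G_m$ with the image curves. A Heegaard state for $\mathcal H_{\alpha\beta}$ corresponds to $(\tilde S,\tilde f)$ via its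 lift $\bigcup_{s\in\tilde S}\tilde\alpha_s\cap\tilde\beta_{\tilde f(s)}$; similarly states of $\mathcal H_{\beta\gamma}$ via $\bigcup_t\tilde\beta_t\cap\tilde\gamma_{\tilde g(t)}$ and of $\mathcal H_{\alpha\gamma}$ via $\bigcup_s\tilde\alpha_s\cap\tilde\gamma_{\tilde h(s)}$. States $\mathbf x,\mathbf y,\mathbf z$ are triangularly connected if their $\mathbb G_m$-equivariant lifts $\tilde{\mathbf x},\tilde{\mathbf y},\tilde{\mathbf z}$ admit $k$ triangles in $\mathbb R^2$ with sides on $\tilde\alpha$, $\tilde\beta$, $\tilde\gamma$ lines in counterclockwise order, whose $\mathbb G_m$-orbits have corners exactly at $\tilde{\mathbf x},\tilde{\mathbf y},\tilde{\mathbf z}$; the quotient of these triangles is a two-chain $\psi\in D(\mathbf x,\mathbf y,\mathbf z)$ (two-chains with $\mathbf x$ as initial $\alpha\beta$ corners, $\mathbf y$ initial $\beta\gamma$ corners, $\mathbf z$ terminal $\alpha\gamma$ corners). *)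

theory Defs
  imports "HOL-Analysis.Analysis"
begin

inductive_set GZ :: "nat \<Rightarrow> (int \<Rightarrow> int) set" for m :: nat where
  GZ_id: "id \<in> GZ m"
| GZ_r1: "g \<in> GZ m \<Longrightarrow> (\<lambda>x. 1 - x) \<circ> g \<in> GZ m"
| GZ_r2: "g \<in> GZ m \<Longrightarrow> (\<lambda>x. 2 * int m - 1 - x) \<circ> g \<in> GZ m"

definition Gorbit :: "nat \<Rightarrow> int \<Rightarrow> int set" where
  "Gorbit m x = (\<lambda>g. g x) ` GZ m"

section \<open>Lifted partial permutations (S,f) represented as partial maps with dom f = S\<close>

definition LPP :: "nat \<Rightarrow> nat \<Rightarrow> (int \<Rightarrow> int option) \<Rightarrow> bool" where
  "LPP m k f \<longleftrightarrow>
     (\<forall>g\<in>GZ m. \<forall>x\<in>dom f. g x \<in> dom f) \<and>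
     card (Gorbit m ` dom f) = k \<and>
     (\<forall>g\<in>GZ m. \<forall>x\<in>dom f. f (g x) = map_option g (f x)) \<and>
     (\<forall>x\<in>dom f. \<forall>y\<in>dom f.
        Gorbit m (the (f x)) = Gorbit m (the (f y)) \<longrightarrow> Gorbit m x = Gorbit m y)"

definition wt :: "int \<Rightarrow> (int \<Rightarrow> int option) \<Rightarrow> real" where
  "wt j f = real (card {i\<in>dom f.
      (real_of_int i < real_of_int j - 1/2 \<and> real_of_int j - 1/2 < real_of_int (the (f i))) \<or>
      (real_of_int i > real_of_int j - 1/2 \<and> real_of_int j - 1/2 > real_of_int (the (f i)))}) / 2"

definition alphaL :: "int \<Rightarrow> (real \<times> real) set" where
  "alphaL l = {p. fst p = real_of_int l}"

definition gammaL :: "int \<Rightarrow> (real \<times> real) set" where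
  "gammaL l = {p. snd p = real_of_int l}"

definition betaL :: "(int \<Rightarrow> real) \<Rightarrow> int \<Rightarrow> (real \<times> real) set" where
  "betaL c l = {p. fst p + snd p = c l}"

inductive_set GR :: "nat \<Rightarrow> (real \<times> real \<Rightarrow> real \<times> real) set" for m :: nat where
  GR_id: "id \<in> GR m"
| GR_r1: "g \<in> GR m \<Longrightarrow> (\<lambda>p. (1 - fst p, 1 - snd p)) \<circ> g \<in> GR m"
| GR_r2: "g \<in> GR m \<Longrightarrow>
     (\<lambda>p. (2 * real m - 1 - fst p, 2 * real m - 1 - snd p)) \<circ> g \<in> GR m"

definition liftAB :: "(int \<Rightarrow> real) \<Rightarrow> (int \<Rightarrow> int option) \<Rightarrow> (real \<times> real) set" where
  "liftAB c f = (\<Union>s\<in>dom f. alphaL s \<inter> betaL c (the (f s)))"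

definition liftBG :: "(int \<Rightarrow> real) \<Rightarrow> (int \<Rightarrow> int option) \<Rightarrow> (real \<times> real) set" where
  "liftBG c g = (\<Union>t\<in>dom g. betaL c t \<inter> gammaL (the (g t)))"

definition liftAG :: "(int \<Rightarrow> int option) \<Rightarrow> (real \<times> real) set" where
  "liftAG h = (\<Union>s\<in>dom h. alphaL s \<inter> gammaL (the (h s)))"

definition statesAB :: "nat \<Rightarrow> nat \<Rightarrow> (int \<Rightarrow> real) \<Rightarrow> (real \<times> real) set set" where
  "statesAB m k c = {liftAB c f | f. LPP m k f}"

definition statesBG :: "nat \<Rightarrow> nat \<Rightarrow> (int \<Rightarrow> real) \<Rightarrow> (real \<times> real) set set" where
  "statesBG m k c = {liftBG c g | g. LPP m k g}"

definition statesAG :: "nat \<Rightarrow> nat \<Rightarrow> (real \<times> real) set set" where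
  "statesAG m k = {liftAG h | h. LPP m k h}"

section \<open>Triangles with sides on alpha_s, beta_t, gamma_h\<close>

definition cornerAB :: "(int \<Rightarrow> real) \<Rightarrow> int \<times> int \<times> int \<Rightarrow> real \<times> real" where
  "cornerAB c \<tau> = (case \<tau> of (s, t, h) \<Rightarrow> (real_of_int s, c t - real_of_int s))"

definition cornerBG :: "(int \<Rightarrow> real) \<Rightarrow> int \<times> int \<times> int \<Rightarrow> real \<times> real" where
  "cornerBG c \<tau> = (case \<tau> of (s, t, h) \<Rightarrow> (c t - real_of_int h, real_of_int h))"

definition cornerAG :: "int \<times> int \<times> int \<Rightarrow> real \<times> real" where
  "cornerAG \<tau> = (case \<tau> of (s, t, h) \<Rightarrow> (real_of_int s, real_of_int h))"

definition triRegion :: "(int \<Rightarrow> real) \<Rightarrow> int \<times> int \<times> int \<Rightarrow> (real \<times> real) set" where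
  "triRegion c \<tau> = convex hull {cornerAB c \<tau>, cornerBG c \<tau>, cornerAG \<tau>}"

definition triWitness :: "nat \<Rightarrow> nat \<Rightarrow> (int \<Rightarrow> real) \<Rightarrow> (real \<times> real) set \<Rightarrow>
    (real \<times> real) set \<Rightarrow> (real \<times> real) set \<Rightarrow> (int \<times> int \<times> int) set \<Rightarrow> bool" where
  "triWitness m k c x y z Tri \<longleftrightarrow>
     finite Tri \<and> card Tri = k \<and>
     (\<Union>\<rho>\<in>GR m. \<Union>\<tau>\<in>Tri. {\<rho> (cornerAB c \<tau>)}) = x \<and>
     (\<Union>\<rho>\<in>GR m. \<Union>\<tau>\<in>Tri. {\<rho> (cornerBG c \<tau>)}) = y \<and>
     (\<Union>\<rho>\<in>GR m. \<Union>\<tau>\<in>Tri. {\<rho> (cornerAG \<tau>)}) = z"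

definition triConnected :: "nat \<Rightarrow> nat \<Rightarrow> (int \<Rightarrow> real) \<Rightarrow> (real \<times> real) set \<Rightarrow>
    (real \<times> real) set \<Rightarrow> (real \<times> real) set \<Rightarrow> bool" where
  "triConnected m k c x y z \<longleftrightarrow> (\<exists>Tri. triWitness m k c x y z Tri)"

text \<open>Local multiplicity at O_i of the quotient two-chain psi of the triangles Tri:
  number of pairs (tau, rho) with the lift (i-1/2, i-1/2) of O_i in rho(tau).\<close>
definition multO :: "nat \<Rightarrow> (int \<Rightarrow> real) \<Rightarrow> (int \<times> int \<times> int) set \<Rightarrow> nat \<Rightarrow> nat" where
  "multO m c Tri i = (\<Sum>\<tau>\<in>Tri.
     card {\<rho>\<in>GR m. (real i - 1/2, real i - 1/2) \<in> \<rho> ` triRegion c \<tau>})"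

end

theory Submission
  imports Defs
begin

text \<open>Every element of \<open>G\<^sub>m\<close> has the form \<open>x \<mapsto> \<plusminus>x + n(2m - 2)\<close> (plus \<open>1\<close> for
  reflections), and the same formula acts diagonally on the plane. Since the \<open>\<beta>\<close>-lines are
  permuted, this action sends the corners \<open>\<alpha>\<^sub>s \<inter> \<beta>\<^sub>t\<close>, \<open>\<beta>\<^sub>t \<inter> \<gamma>\<^sub>h\<close>,
  \<open>\<alpha>\<^sub>s \<inter> \<gamma>\<^sub>h\<close> of the triangle labelled \<open>(s, t, h)\<close> to the corners of the triangle whose
  labels are moved componentwise. A triangle has its three corners in the lifts of \<open>f\<close>, \<open>g\<close>,
  \<open>h\<close> exactly when \<open>t = f s\<close> and \<open>h = g t\<close>; hence triangularly connected states are the lifts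
  of composable pairs, with \<open>h = g \<circ> f\<close>, and the connecting triangles are the triples
  \<open>(s, f s, g (f s))\<close> for \<open>s\<close> in a transversal of the orbits of \<open>S\<close>.

  The point \<open>(j - 1/2, j - 1/2)\<close> lies in the triangle \<open>(s, t, h)\<close> iff \<open>t\<close> lies on one side of
  \<open>j - 1/2\<close> and \<open>s\<close>, \<open>h\<close> on the other. As \<open>G\<^sub>m\<close> acts freely on \<open>\<int>\<close>, \<open>n\<^sub>O\<^sub>j(\<psi>)\<close>
  counts the \<open>s \<in> S\<close> with this property, and the weight identity is a pointwise count: the path
  \<open>s \<rightarrow> f s \<rightarrow> g (f s)\<close> crosses \<open>j - 1/2\<close> as often as \<open>s \<rightarrow> g (f s)\<close>, plus twice exactly
  in that case.\<close>

section \<open>The group \<open>G\<^sub>m\<close> and its actions\<close>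

definition gact :: "nat \<Rightarrow> bool \<times> int \<Rightarrow> 'a::comm_ring_1 \<Rightarrow> 'a" where
  "gact m \<sigma> x = (if fst \<sigma> then 1 - x else x) + of_int (snd \<sigma> * (2 * int m - 2))"

definition gmul :: "bool \<times> int \<Rightarrow> bool \<times> int \<Rightarrow> bool \<times> int" where
  "gmul \<sigma> \<tau> = (fst \<sigma> \<noteq> fst \<tau>, snd \<sigma> + (if fst \<sigma> then - snd \<tau> else snd \<tau>))"

definition ginv :: "bool \<times> int \<Rightarrow> bool \<times> int" where
  "ginv \<sigma> = (fst \<sigma>, if fst \<sigma> then snd \<sigma> else - snd \<sigma>)"

lemma gact_gmul: "gact m \<sigma> (gact m \<tau> x) = gact m (gmul \<sigma> \<tau>) x"
  by (cases \<sigma>; cases \<tau>) (auto simp: gact_def gmul_def algebra_simps)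

lemma gact_ginv: "gact m (ginv \<sigma>) (gact m \<sigma> x) = x"
  by (cases \<sigma>) (auto simp: gact_def ginv_def algebra_simps)

lemma gact_unit [simp]: "gact m (False, 0) x = x"
  by (simp add: gact_def)

lemma gact_comp: "gact m \<sigma> \<circ> gact m \<tau> = gact m (gmul \<sigma> \<tau>)"
  by (simp add: fun_eq_iff gact_gmul)

lemma gact_unit_eq_id: "gact m (False, 0) = id"
  by (simp add: fun_eq_iff)

lemma gact_of_int: "gact m \<sigma> (of_int x) = of_int (gact m \<sigma> x)"
  by (simp add: gact_def)

lemma gact_diff: "gact m \<sigma> (x - y) = gact m \<sigma> x + gact m \<sigma> 0 - gact m \<sigma> y"
  by (simp add: gact_def algebra_simps)

lemma gact_dist: "\<bar>gact m \<sigma> x - gact m \<sigma> y\<bar> = \<bar>x - (y :: 'a::linordered_idom)\<bar>"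
  by (auto simp: gact_def abs_minus_commute)

lemma gact_reflections:
  "gact m (True, 0) = (\<lambda>x. 1 - x)" "gact m (True, 1) = (\<lambda>x. 2 * of_nat m - 1 - x)"
  by (auto simp: gact_def fun_eq_iff algebra_simps)

text \<open>The action on \<open>\<int>\<close> is free as soon as \<open>m \<ge> 2\<close>: a reflection has no integer fixed point
  since \<open>2x = 1 + n(2m - 2)\<close> is impossible by parity.\<close>
lemma gact_free:
  assumes "2 \<le> m" and "gact m \<sigma> (x :: int) = gact m \<tau> x"
  shows "\<sigma> = \<tau>"
proof -
  obtain b n b' n' where \<sigma>\<tau>: "\<sigma> = (b, n)" "\<tau> = (b', n')" by fastforce
  define d where "d = 2 * int m - 2"
  have eq: "(if b then 1 - x else x) + n * d = (if b' then 1 - x else x) + n' * d"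
    using assms(2) by (simp add: \<sigma>\<tau> gact_def d_def)
  show ?thesis
  proof (cases "b = b'")
    case True
    moreover have "d \<noteq> 0" using assms(1) by (simp add: d_def)
    ultimately show ?thesis using eq by (simp add: \<sigma>\<tau>)
  next
    case False
    then have "1 - 2 * x = (n' - n) * d \<or> 1 - 2 * x = (n - n') * d"
      using eq by (cases b) (auto simp: algebra_simps)
    moreover have "even d" by (simp add: d_def)
    moreover have "odd (1 - 2 * x)" by simp
    ultimately show ?thesis by (metis dvd_mult)
  qed
qed

definition pact :: "nat \<Rightarrow> bool \<times> int \<Rightarrow> 'a::comm_ring_1 \<times> 'a \<Rightarrow> 'a \<times> 'a" where
  "pact m \<sigma> = map_prod (gact m \<sigma>) (gact m \<sigma>)"

lemma pact_gmul: "pact m \<sigma> \<circ> pact m \<tau> = pact m (gmul \<sigma> \<tau>)"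
  by (simp add: pact_def map_prod.comp gact_comp)

lemma pact_unit: "pact m (False, 0) = id"
  by (simp add: pact_def gact_unit_eq_id map_prod.id)

lemma inj_pact: "2 \<le> m \<Longrightarrow> inj (pact m :: _ \<Rightarrow> real \<times> real \<Rightarrow> _)"
proof (rule injI)
  fix \<sigma> \<tau> assume "2 \<le> m" and eq: "pact m \<sigma> = (pact m \<tau> :: real \<times> real \<Rightarrow> _)"
  have "gact m \<sigma> (of_int 0 :: real) = gact m \<tau> (of_int 0)"
    using fun_cong[OF eq, of "(0, 0)"] by (simp add: pact_def)
  then have "gact m \<sigma> (0 :: int) = gact m \<tau> 0"
    unfolding gact_of_int of_int_eq_iff .
  then show "\<sigma> = \<tau>" using gact_free \<open>2 \<le> m\<close> by blast
qed

lemma range_action_subset: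
  assumes "\<And>\<sigma> \<tau>. A \<sigma> \<circ> A \<tau> = A (gmul \<sigma> \<tau>)" and "A (False, 0) = id"
    and "id \<in> X" and "\<And>g. g \<in> X \<Longrightarrow> A (True, 0) \<circ> g \<in> X" and "\<And>g. g \<in> X \<Longrightarrow> A (True, 1) \<circ> g \<in> X"
  shows "range A \<subseteq> X"
proof -
  have translation_mem: "A (False, int n) \<in> X \<and> A (False, - int n) \<in> X" for n
  proof (induction n)
    case 0
    then show ?case using assms(2,3) by (metis minus_zero of_nat_0)
  next
    case (Suc n)
    have "A (False, int (Suc n)) = A (True, 1) \<circ> (A (True, 0) \<circ> A (False, int n))"
      "A (False, - int (Suc n)) = A (True, 0) \<circ> (A (True, 1) \<circ> A (False, - int n))"
      by (simp_all add: assms(1) gmul_def)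
    then show ?case using Suc assms(4,5) by metis
  qed
  have translation: "A (False, n) \<in> X" for n
    using translation_mem[of "nat n"] translation_mem[of "nat (- n)"] by (cases "n \<ge> 0") auto
  have "A (True, n) = A (True, 0) \<circ> A (False, - n)" for n
    by (simp add: assms(1) gmul_def)
  then have "A (True, n) \<in> X" for n
    using assms(4) translation by metis
  then have "A (b, n) \<in> X" for b n
    using translation by (cases b) auto
  then show ?thesis by auto
qed

lemma GZ_eq_range_gact: "GZ m = range (gact m)"
proof
  show "GZ m \<subseteq> range (gact m)"
  proof
    fix g assume "g \<in> GZ m"
    then show "g \<in> range (gact m)"
    proof induction
      case GZ_id
      then show ?case by (metis gact_unit eq_id_iff rangeI)
    next
      case (GZ_r1 g)
      then obtain \<sigma> where "g = gact m \<sigma>" by blast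
      then have "(\<lambda>x. 1 - x) \<circ> g = gact m (gmul (True, 0) \<sigma>)"
        by (auto simp: fun_eq_iff gact_gmul[symmetric] gact_reflections)
      then show ?case by simp
    next
      case (GZ_r2 g)
      then obtain \<sigma> where "g = gact m \<sigma>" by blast
      then have "(\<lambda>x. 2 * int m - 1 - x) \<circ> g = gact m (gmul (True, 1) \<sigma>)"
        by (auto simp: fun_eq_iff gact_gmul[symmetric] gact_reflections)
      then show ?case by simp
    qed
  qed
  have "gact m (True, 0) \<circ> g \<in> GZ m" if "g \<in> GZ m" for g
    using GZ.GZ_r1[OF that] by (simp only: gact_reflections)
  moreover have "gact m (True, 1) \<circ> g \<in> GZ m" if "g \<in> GZ m" for g
    using GZ.GZ_r2[OF that] by (simp only: gact_reflections)
  ultimately show "range (gact m) \<subseteq> GZ m"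
    by (rule range_action_subset[OF gact_comp gact_unit_eq_id GZ.GZ_id])
qed

lemma GR_eq_range_pact: "GR m = range (pact m)"
proof
  show "GR m \<subseteq> range (pact m)"
  proof
    fix g assume "g \<in> GR m"
    then show "g \<in> range (pact m)"
    proof induction
      case GR_id
      then show ?case by (metis gact_unit eq_id_iff map_prod.id pact_def rangeI)
    next
      case (GR_r1 g)
      then obtain \<sigma> where "g = pact m \<sigma>" by blast
      then have "(\<lambda>p. (1 - fst p, 1 - snd p)) \<circ> g = pact m (gmul (True, 0) \<sigma>)"
        by (auto simp: fun_eq_iff pact_def gact_gmul[symmetric] gact_reflections)
      then show ?case by simp
    next
      case (GR_r2 g)
      then obtain \<sigma> where "g = pact m \<sigma>" by blast
      then have "(\<lambda>p. (2 * real m - 1 - fst p, 2 * real m - 1 - snd p)) \<circ> g = pact m (gmul (True, 1) \<sigma>)"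
        by (auto simp: fun_eq_iff pact_def gact_gmul[symmetric] gact_reflections)
      then show ?case by simp
    qed
  qed
  have reflections: "pact m (True, 0) = (\<lambda>p. (1 - fst p, 1 - snd p))"
    "pact m (True, 1) = (\<lambda>p. (2 * real m - 1 - fst p, 2 * real m - 1 - snd p))"
    by (auto simp: fun_eq_iff pact_def gact_reflections)
  have "pact m (True, 0) \<circ> g \<in> GR m" if "g \<in> GR m" for g
    using GR.GR_r1[OF that] by (simp only: reflections)
  moreover have "pact m (True, 1) \<circ> g \<in> GR m" if "g \<in> GR m" for g
    using GR.GR_r2[OF that] by (simp only: reflections)
  ultimately show "range (pact m) \<subseteq> GR m"
    by (rule range_action_subset[OF pact_gmul pact_unit GR.GR_id])
qed

section \<open>Orbits and lifted partial permutations\<close>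

lemma Gorbit_eq_range: "Gorbit m x = range (\<lambda>\<sigma>. gact m \<sigma> x)"
  by (auto simp: Gorbit_def GZ_eq_range_gact)

lemma mem_Gorbit_self: "x \<in> Gorbit m x"
  unfolding Gorbit_eq_range by (metis gact_unit rangeI)

lemma Gorbit_gact [simp]: "Gorbit m (gact m \<sigma> x) = Gorbit m x"
proof -
  have "Gorbit m (gact m \<sigma> y) \<subseteq> Gorbit m y" for \<sigma> y
    by (auto simp: Gorbit_eq_range gact_gmul)
  from this[of \<sigma> x] this[of "ginv \<sigma>" "gact m \<sigma> x"] show ?thesis
    by (simp add: gact_ginv)
qed

lemma Gorbit_eq_iff: "Gorbit m y = Gorbit m x \<longleftrightarrow> (\<exists>\<sigma>. y = gact m \<sigma> x)"
  by (metis Gorbit_gact Gorbit_eq_range mem_Gorbit_self rangeE)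

definition orbit_transversal :: "nat \<Rightarrow> int set \<Rightarrow> int set \<Rightarrow> bool" where
  "orbit_transversal m R A \<longleftrightarrow> R \<subseteq> A \<and> bij_betw (Gorbit m) R (Gorbit m ` A)"

lemma orbit_transversal_exists: "\<exists>R. orbit_transversal m R A"
proof
  let ?R = "inv_into A (Gorbit m) ` Gorbit m ` A"
  have "inj_on (Gorbit m) ?R"
    by (rule inj_onI) (auto simp: f_inv_into_f)
  then show "orbit_transversal m ?R A"
    by (auto simp: orbit_transversal_def bij_betw_def image_inv_into_cancel inv_into_into)
qed

lemma orbit_transversal_cover:
  assumes "orbit_transversal m R A" and "s \<in> A"
  obtains \<sigma> r where "r \<in> R" and "s = gact m \<sigma> r"
proof -
  have "Gorbit m s \<in> Gorbit m ` R"
    using assms unfolding orbit_transversal_def bij_betw_def by blast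
  then show ?thesis using that Gorbit_eq_iff by (metis imageE)
qed

lemma orbit_transversalI:
  assumes "R \<subseteq> A" and "finite R" and "card R = card (Gorbit m ` A)"
    and "\<And>s. s \<in> A \<Longrightarrow> \<exists>\<sigma>. \<exists>r\<in>R. s = gact m \<sigma> r"
  shows "orbit_transversal m R A"
proof -
  have "Gorbit m ` R = Gorbit m ` A"
    using assms(1,4) by (fastforce simp: image_iff)
  then show ?thesis
    using assms(1-3) eq_card_imp_inj_on[of R "Gorbit m"]
    by (simp add: orbit_transversal_def bij_betw_def)
qed

lemma orbit_transversal_bij:
  assumes "2 \<le> m" and "orbit_transversal m R A" and "\<And>\<sigma> s. s \<in> A \<Longrightarrow> gact m \<sigma> s \<in> A"
  shows "bij_betw (\<lambda>(r, \<sigma>). gact m \<sigma> r) (R \<times> UNIV) A"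
proof -
  have inj: "inj_on (Gorbit m) R" and "R \<subseteq> A"
    using assms(2) by (auto simp: orbit_transversal_def bij_betw_def)
  have "inj_on (\<lambda>(r, \<sigma>). gact m \<sigma> r) (R \<times> UNIV)"
  proof (rule inj_onI)
    fix p q assume "p \<in> R \<times> UNIV" "q \<in> R \<times> UNIV"
      and "(\<lambda>(r, \<sigma>). gact m \<sigma> r) p = (\<lambda>(r, \<sigma>). gact m \<sigma> r) q"
    then obtain r \<sigma> r' \<sigma>' where pq: "p = (r, \<sigma>)" "q = (r', \<sigma>')" "r \<in> R" "r' \<in> R"
      and eq: "gact m \<sigma> r = gact m \<sigma>' r'" by auto
    then have "Gorbit m r = Gorbit m r'" by (metis Gorbit_gact)
    then have "r = r'" using inj pq by (meson inj_onD)
    then show "p = q" using pq eq gact_free[OF assms(1)] by blast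
  qed
  moreover have "(\<lambda>(r, \<sigma>). gact m \<sigma> r) ` (R \<times> UNIV) = A"
  proof
    show "(\<lambda>(r, \<sigma>). gact m \<sigma> r) ` (R \<times> UNIV) \<subseteq> A"
      using \<open>R \<subseteq> A\<close> assms(3) by auto
    show "A \<subseteq> (\<lambda>(r, \<sigma>). gact m \<sigma> r) ` (R \<times> UNIV)"
    proof
      fix s assume "s \<in> A"
      then obtain \<sigma> r where "r \<in> R" "s = gact m \<sigma> r"
        using orbit_transversal_cover[OF assms(2)] by blast
      then show "s \<in> (\<lambda>(r, \<sigma>). gact m \<sigma> r) ` (R \<times> UNIV)" by force
    qed
  qed
  ultimately show ?thesis by (simp add: bij_betw_def)
qed

lemma orbit_transversal_bij_filter:
  assumes "2 \<le> m" and R: "orbit_transversal m R A" and "\<And>\<sigma> s. s \<in> A \<Longrightarrow> gact m \<sigma> s \<in> A"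
  shows "bij_betw (\<lambda>(r, \<sigma>). gact m \<sigma> r) (SIGMA r:R. {\<sigma>. P (gact m \<sigma> r)}) {s \<in> A. P s}"
proof (rule bij_betw_subset[OF orbit_transversal_bij[OF assms]])
  show "(SIGMA r:R. {\<sigma>. P (gact m \<sigma> r)}) \<subseteq> R \<times> UNIV" by blast
  have "R \<subseteq> A" using R by (simp add: orbit_transversal_def)
  show "(\<lambda>(r, \<sigma>). gact m \<sigma> r) ` (SIGMA r:R. {\<sigma>. P (gact m \<sigma> r)}) = {s \<in> A. P s}"
  proof (intro equalityI subsetI)
    fix x assume "x \<in> (\<lambda>(r, \<sigma>). gact m \<sigma> r) ` (SIGMA r:R. {\<sigma>. P (gact m \<sigma> r)})"
    then obtain r \<sigma> where "r \<in> R" "P (gact m \<sigma> r)" "x = gact m \<sigma> r" by auto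
    moreover have "gact m \<sigma> r \<in> A" using \<open>R \<subseteq> A\<close> \<open>r \<in> R\<close> assms(3) by blast
    ultimately show "x \<in> {s \<in> A. P s}" by blast
  next
    fix s assume s: "s \<in> {s \<in> A. P s}"
    then obtain \<sigma> r where "r \<in> R" "s = gact m \<sigma> r"
      using orbit_transversal_cover[OF R] by blast
    moreover have "P (gact m \<sigma> r)" using s \<open>s = gact m \<sigma> r\<close> by blast
    ultimately show "s \<in> (\<lambda>(r, \<sigma>). gact m \<sigma> r) ` (SIGMA r:R. {\<sigma>. P (gact m \<sigma> r)})"
      by (intro image_eqI[where x = "(r, \<sigma>)"]) auto
  qed
qed

lemma card_filter_eq_sum_transversal:
  assumes "2 \<le> m" and "orbit_transversal m R A" and "\<And>\<sigma> s. s \<in> A \<Longrightarrow> gact m \<sigma> s \<in> A"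
    and "finite R" and "finite {s \<in> A. P s}"
  shows "card {s \<in> A. P s} = (\<Sum>r\<in>R. card {\<sigma>. P (gact m \<sigma> r)})"
proof -
  let ?S = "SIGMA r:R. {\<sigma>. P (gact m \<sigma> r)}"
  have bij: "bij_betw (\<lambda>(r, \<sigma>). gact m \<sigma> r) ?S {s \<in> A. P s}"
    using orbit_transversal_bij_filter[OF assms(1-3)] .
  then have "finite ?S" using assms(5) bij_betw_finite by blast
  have "finite {\<sigma>. P (gact m \<sigma> r)}" if "r \<in> R" for r
  proof -
    have "{\<sigma>. P (gact m \<sigma> r)} \<subseteq> snd ` ?S"
    proof
      fix \<sigma> assume "\<sigma> \<in> {\<sigma>. P (gact m \<sigma> r)}"
      then have "(r, \<sigma>) \<in> ?S" using that by blast
      then show "\<sigma> \<in> snd ` ?S" by (metis image_eqI snd_conv)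
    qed
    then show ?thesis using \<open>finite ?S\<close> by (meson finite_imageI finite_subset)
  qed
  then have "(\<Sum>r\<in>R. card {\<sigma>. P (gact m \<sigma> r)}) = card ?S" using assms(4) by simp
  also have "\<dots> = card {s \<in> A. P s}" using bij by (rule bij_betw_same_card)
  finally show ?thesis by simp
qed

lemma LPP_D:
  assumes "LPP m k f"
  shows LPP_GZ_mem_dom: "\<And>g x. g \<in> GZ m \<Longrightarrow> x \<in> dom f \<Longrightarrow> g x \<in> dom f"
    and LPP_card_orbits: "card (Gorbit m ` dom f) = k"
    and LPP_GZ_equivariant: "\<And>g x. g \<in> GZ m \<Longrightarrow> x \<in> dom f \<Longrightarrow> f (g x) = map_option g (f x)"
    and LPP_orbit_inj: "\<And>x y. x \<in> dom f \<Longrightarrow> y \<in> dom f \<Longrightarrow>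
      Gorbit m (the (f x)) = Gorbit m (the (f y)) \<Longrightarrow> Gorbit m x = Gorbit m y"
  using assms unfolding LPP_def by blast+

lemma LPP_gact_mem_dom: "LPP m k f \<Longrightarrow> s \<in> dom f \<Longrightarrow> gact m \<sigma> s \<in> dom f"
  using LPP_GZ_mem_dom[of m k f "gact m \<sigma>" s] by (simp add: GZ_eq_range_gact)

lemma LPP_gact:
  assumes "LPP m k f" and "s \<in> dom f"
  shows "f (gact m \<sigma> s) = Some (gact m \<sigma> (the (f s)))"
proof -
  have "f (gact m \<sigma> s) = map_option (gact m \<sigma>) (f s)"
    using LPP_GZ_equivariant[OF assms(1), of "gact m \<sigma>" s] assms(2) by (simp add: GZ_eq_range_gact)
  then show ?thesis using assms(2) by auto
qed

lemma LPP_inj_on: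
  assumes "2 \<le> m" and "LPP m k f"
  shows "inj_on (\<lambda>s. the (f s)) (dom f)"
proof (rule inj_onI)
  fix s s' assume s: "s \<in> dom f" "s' \<in> dom f" and eq: "the (f s) = the (f s')"
  then have "Gorbit m s' = Gorbit m s"
    using LPP_orbit_inj[OF assms(2) s(2,1)] by simp
  then obtain \<sigma> where \<sigma>: "s' = gact m \<sigma> s" using Gorbit_eq_iff by blast
  then have "f s' = Some (gact m \<sigma> (the (f s)))"
    using LPP_gact[OF assms(2) s(1)] by simp
  then have "gact m \<sigma> (the (f s)) = gact m (False, 0) (the (f s))"
    using eq by (metis gact_unit option.sel)
  then have "\<sigma> = (False, 0)" by (rule gact_free[OF assms(1)])
  then show "s = s'" using \<sigma> by simp
qed

lemma LPP_transversal_finite: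
  assumes "LPP m k f" and "0 < k" and "orbit_transversal m R (dom f)"
  shows "finite R" and "card R = k"
proof -
  have bij: "bij_betw (Gorbit m) R (Gorbit m ` dom f)"
    using assms(3) by (simp add: orbit_transversal_def)
  then show "card R = k" using LPP_card_orbits[OF assms(1)] by (simp add: bij_betw_same_card)
  with assms(2) show "finite R" using card_ge_0_finite by blast
qed

definition crosses :: "int \<Rightarrow> int \<Rightarrow> int \<Rightarrow> bool" where
  "crosses j x y \<longleftrightarrow> (x < j \<and> j \<le> y) \<or> (j \<le> x \<and> y < j)"

lemma wt_eq_card_crosses: "wt j f = real (card {s \<in> dom f. crosses j s (the (f s))}) / 2"
proof -
  have "((real_of_int i < real_of_int j - 1/2 \<and> real_of_int j - 1/2 < real_of_int y) \<or>
      (real_of_int i > real_of_int j - 1/2 \<and> real_of_int j - 1/2 > real_of_int y)) \<longleftrightarrow> crosses j i y"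
    for i y
    unfolding crosses_def by linarith
  then show ?thesis unfolding wt_def by simp
qed

text \<open>A crossing of \<open>j - 1/2\<close> by \<open>s \<mapsto> f s\<close> forces \<open>|s - j| \<le> |f s - s|\<close>, and the
  displacement \<open>|f s - s|\<close> is constant on each of the finitely many orbits.\<close>
lemma LPP_finite_crossings:
  assumes "LPP m k f" and "0 < k"
  shows "finite {s \<in> dom f. crosses j s (the (f s))}"
proof -
  obtain R where R: "orbit_transversal m R (dom f)" using orbit_transversal_exists by blast
  define M where "M = Max ((\<lambda>r. \<bar>the (f r) - r\<bar>) ` R)"
  have "\<bar>the (f s) - s\<bar> \<le> M" if s: "s \<in> dom f" for s
  proof -
    obtain \<sigma> r where r: "r \<in> R" "s = gact m \<sigma> r"
      using orbit_transversal_cover[OF R s] .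
    then have "r \<in> dom f" using R by (auto simp: orbit_transversal_def)
    then have "\<bar>the (f s) - s\<bar> = \<bar>the (f r) - r\<bar>"
      using r(2) LPP_gact[OF assms(1)] gact_dist by simp
    then show ?thesis
      unfolding M_def using r(1) LPP_transversal_finite(1)[OF assms R] by simp
  qed
  then have "{s \<in> dom f. crosses j s (the (f s))} \<subseteq> {j - M .. j + M}"
    by (fastforce simp: crosses_def)
  then show ?thesis by (rule finite_subset) simp
qed

section \<open>Corners and triangles\<close>

lemma alphaL_inter_betaL: "alphaL s \<inter> betaL c l = {(real_of_int s, c l - real_of_int s)}"
  by (auto simp: alphaL_def betaL_def)

lemma betaL_inter_gammaL: "betaL c t \<inter> gammaL h = {(c t - real_of_int h, real_of_int h)}"
  by (auto simp: betaL_def gammaL_def)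

lemma alphaL_inter_gammaL: "alphaL s \<inter> gammaL h = {(real_of_int s, real_of_int h)}"
  by (auto simp: alphaL_def gammaL_def)

lemma liftAB_eq: "liftAB c f = (\<lambda>s. cornerAB c (s, the (f s), 0)) ` dom f"
  by (auto simp: liftAB_def alphaL_inter_betaL cornerAB_def)

lemma liftBG_eq: "liftBG c g = (\<lambda>t. cornerBG c (0, t, the (g t))) ` dom g"
  by (auto simp: liftBG_def betaL_inter_gammaL cornerBG_def)

lemma liftAG_eq: "liftAG h = (\<lambda>s. cornerAG (s, 0, the (h s))) ` dom h"
  by (auto simp: liftAG_def alphaL_inter_gammaL cornerAG_def)

definition tact :: "nat \<Rightarrow> bool \<times> int \<Rightarrow> int \<times> int \<times> int \<Rightarrow> int \<times> int \<times> int" where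
  "tact m \<sigma> = map_prod (gact m \<sigma>) (map_prod (gact m \<sigma>) (gact m \<sigma>))"

lemma tact_apply [simp]: "tact m \<sigma> (s, t, h) = (gact m \<sigma> s, gact m \<sigma> t, gact m \<sigma> h)"
  by (simp add: tact_def)

lemma cornerAG_eq_iff: "cornerAG (s, t, h) = cornerAG (s', t', h') \<longleftrightarrow> s = s' \<and> h = h'"
  by (simp add: cornerAG_def)

lemma cornerAG_tact: "pact m \<sigma> (cornerAG \<tau>) = cornerAG (tact m \<sigma> \<tau>)"
  by (cases \<tau>) (simp add: cornerAG_def pact_def gact_of_int)

lemma cornerAG_mem_liftAG_iff: "cornerAG (s, t, u) \<in> liftAG h \<longleftrightarrow> h s = Some u"
  by (force simp: liftAG_eq cornerAG_eq_iff)

lemma map_eqI_Some: "(\<And>x y. f x = Some y \<longleftrightarrow> g x = Some y) \<Longrightarrow> f = g"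
  by (metis not_Some_eq ext)

locale beta_lines =
  fixes m :: nat and c :: "int \<Rightarrow> real"
  assumes beta_diag: "\<forall>l. 2 * real_of_int l - 1 < c l \<and> c l < 2 * real_of_int l + 1"
    and beta_generic: "\<forall>s l. c l \<noteq> 2 * real_of_int s"
    and beta_inv: "\<forall>\<rho>\<in>GR m. \<forall>l. \<exists>l'. \<rho> ` betaL c l = betaL c l'"
begin

lemma c_bounds: "2 * real_of_int l - 1 < c l" "c l < 2 * real_of_int l + 1"
  using beta_diag by auto

lemma eq_if_c_in_interval: "2 * real_of_int l - 1 < v \<Longrightarrow> v < 2 * real_of_int l + 1 \<Longrightarrow> c l' = v \<Longrightarrow> l' = l"
  using c_bounds[of l'] by linarith

lemma c_inj: "c l = c l' \<longleftrightarrow> l = l'"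
  using c_bounds eq_if_c_in_interval by metis

lemma c_not_int: "c t \<noteq> real_of_int n"
proof
  assume "c t = real_of_int n"
  then have "n = 2 * t" using c_bounds[of t] by linarith
  with \<open>c t = real_of_int n\<close> show False using beta_generic by auto
qed

text \<open>The image of \<open>\<beta>\<^sub>t\<close> under \<open>pact m \<sigma>\<close> is some \<open>\<beta>\<^sub>l\<close>; it contains the image of
  \<open>(c t, 0)\<close>, and the bounds on \<open>c\<close> force \<open>l = gact m \<sigma> t\<close>.\<close>
lemma c_gact: "c (gact m \<sigma> t) = gact m \<sigma> (c t) + gact m \<sigma> 0"
proof -
  have "pact m \<sigma> \<in> GR m" by (simp add: GR_eq_range_pact)
  then obtain l where l: "pact m \<sigma> ` betaL c t = betaL c l" using beta_inv by blast
  have "(c t, 0) \<in> betaL c t" by (simp add: betaL_def)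
  then have "pact m \<sigma> (c t, 0) \<in> betaL c l" using l by blast
  then have cl: "c l = gact m \<sigma> (c t) + gact m \<sigma> 0" by (simp add: betaL_def pact_def)
  have "2 * real_of_int (gact m \<sigma> t) - 1 < c l" "c l < 2 * real_of_int (gact m \<sigma> t) + 1"
    unfolding cl using c_bounds[of t] by (auto simp: gact_def)
  then have "l = gact m \<sigma> t" using eq_if_c_in_interval by blast
  then show ?thesis using cl by simp
qed

lemma cornerAB_tact: "pact m \<sigma> (cornerAB c \<tau>) = cornerAB c (tact m \<sigma> \<tau>)"
  by (cases \<tau>) (simp add: cornerAB_def pact_def gact_of_int gact_diff c_gact)

lemma cornerBG_tact: "pact m \<sigma> (cornerBG c \<tau>) = cornerBG c (tact m \<sigma> \<tau>)"
  by (cases \<tau>) (simp add: cornerBG_def pact_def gact_of_int gact_diff c_gact)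

lemma cornerAB_eq_iff: "cornerAB c (s, t, h) = cornerAB c (s', t', h') \<longleftrightarrow> s = s' \<and> t = t'"
  by (auto simp: cornerAB_def c_inj)

lemma cornerBG_eq_iff: "cornerBG c (s, t, h) = cornerBG c (s', t', h') \<longleftrightarrow> t = t' \<and> h = h'"
  by (auto simp: cornerBG_def c_inj)

lemma cornerAB_mem_liftAB_iff: "cornerAB c (s, t, u) \<in> liftAB c f \<longleftrightarrow> f s = Some t"
  by (force simp: liftAB_eq cornerAB_eq_iff)

lemma cornerBG_mem_liftBG_iff: "cornerBG c (s, t, u) \<in> liftBG c g \<longleftrightarrow> g t = Some u"
  by (force simp: liftBG_eq cornerBG_eq_iff)

lemma inj_liftAB: "inj (liftAB c)"
  by (rule injI, rule map_eqI_Some) (metis cornerAB_mem_liftAB_iff)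

lemma inj_liftBG: "inj (liftBG c)"
  by (rule injI, rule map_eqI_Some) (metis cornerBG_mem_liftBG_iff)

lemma triRegion_tact: "pact m \<sigma> ` triRegion c \<tau> = triRegion c (tact m \<sigma> \<tau>)"
proof -
  define n :: real where "n = of_int (snd \<sigma> * (2 * int m - 2))"
  obtain a e where affine: "pact m \<sigma> = (\<lambda>x. a + e *\<^sub>R x :: real \<times> real)"
  proof (cases "fst \<sigma>")
    case True
    then have "pact m \<sigma> = (\<lambda>x. (1 + n, 1 + n) + (-1) *\<^sub>R x :: real \<times> real)"
      by (simp add: fun_eq_iff pact_def gact_def n_def)
    then show ?thesis using that by blast
  next
    case False
    then have "pact m \<sigma> = (\<lambda>x. (n, n) + 1 *\<^sub>R x :: real \<times> real)"
      by (simp add: fun_eq_iff pact_def gact_def n_def)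
    then show ?thesis using that by blast
  qed
  have "pact m \<sigma> ` triRegion c \<tau> = convex hull (pact m \<sigma> ` {cornerAB c \<tau>, cornerBG c \<tau>, cornerAG \<tau>})"
    unfolding triRegion_def affine by (rule convex_hull_affinity[symmetric])
  then show ?thesis
    by (simp add: triRegion_def cornerAB_tact cornerBG_tact cornerAG_tact)
qed

text \<open>With \<open>D = c t - s - h \<noteq> 0\<close>, the barycentric coordinates of \<open>(x, x)\<close> with respect to the
  corners \<open>\<alpha>\<beta>\<close>, \<open>\<beta>\<gamma>\<close>, \<open>\<alpha>\<gamma>\<close> are \<open>(x - h, x - s, c t - 2x) / D\<close>.\<close>
lemma diag_mem_triRegion_iff_coords:
  fixes s t h :: int and x :: real
  defines "D \<equiv> c t - real_of_int s - real_of_int h"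
  shows "(x, x) \<in> triRegion c (s, t, h) \<longleftrightarrow>
    0 \<le> (x - real_of_int h) / D \<and> 0 \<le> (x - real_of_int s) / D \<and> 0 \<le> (c t - 2 * x) / D"
proof -
  have "D \<noteq> 0" using c_not_int[of t "s + h"] by (auto simp: D_def)
  have ct: "c t = D + real_of_int s + real_of_int h" by (simp add: D_def)
  have point_eq: "(x, x) = u *\<^sub>R cornerAB c (s, t, h) + v *\<^sub>R cornerBG c (s, t, h) + w *\<^sub>R cornerAG (s, t, h)
      \<longleftrightarrow> x = real_of_int s + v * D \<and> x = real_of_int h + u * D" if "w = 1 - u - v" for u v w
    unfolding that cornerAB_def cornerBG_def cornerAG_def by (simp add: ct algebra_simps)
  have "x = real_of_int s + v * D \<longleftrightarrow> v = (x - real_of_int s) / D"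
    and "x = real_of_int h + u * D \<longleftrightarrow> u = (x - real_of_int h) / D" for u v
    using \<open>D \<noteq> 0\<close> by (auto simp: field_simps)
  moreover have "(c t - 2 * x) / D = 1 - (x - real_of_int h) / D - (x - real_of_int s) / D"
    using \<open>D \<noteq> 0\<close> by (simp add: ct field_simps)
  ultimately have coords: "(x, x) = u *\<^sub>R cornerAB c (s, t, h) + v *\<^sub>R cornerBG c (s, t, h) + w *\<^sub>R cornerAG (s, t, h)
      \<and> u + v + w = 1 \<longleftrightarrow>
      u = (x - real_of_int h) / D \<and> v = (x - real_of_int s) / D \<and> w = (c t - 2 * x) / D" for u v w
    using point_eq[of w u v] by (cases "w = 1 - u - v") auto
  have "(x, x) \<in> triRegion c (s, t, h) \<longleftrightarrow> (\<exists>u v w. ((x, x) = u *\<^sub>R cornerAB c (s, t, h)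
      + v *\<^sub>R cornerBG c (s, t, h) + w *\<^sub>R cornerAG (s, t, h) \<and> u + v + w = 1) \<and> 0 \<le> u \<and> 0 \<le> v \<and> 0 \<le> w)"
    unfolding triRegion_def convex_hull_3 by blast
  then show ?thesis unfolding coords by auto
qed

lemma diag_mem_triRegion_iff:
  "(real_of_int j - 1/2, real_of_int j - 1/2) \<in> triRegion c (s, t, h) \<longleftrightarrow>
     (s < j \<and> h < j \<and> j \<le> t) \<or> (j \<le> s \<and> j \<le> h \<and> t < j)"
  unfolding diag_mem_triRegion_iff_coords zero_le_divide_iff
  using c_bounds[of t] c_not_int[of t "s + h"] by auto

end

section \<open>Triangle witnesses\<close>

definition tri_orbit :: "nat \<Rightarrow> (int \<times> int \<times> int) set \<Rightarrow> (int \<times> int \<times> int) set" where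
  "tri_orbit m Tri = (\<Union>\<sigma>. tact m \<sigma> ` Tri)"

lemma tri_orbit_subset: "Tri \<subseteq> tri_orbit m Tri"
proof
  fix \<tau> assume "\<tau> \<in> Tri"
  moreover have "tact m (False, 0) \<tau> = \<tau>" by (cases \<tau>) simp
  ultimately show "\<tau> \<in> tri_orbit m Tri" unfolding tri_orbit_def by (metis UNIV_I UN_iff image_eqI)
qed

lemma GR_images_eq_tri_orbit:
  assumes "\<And>\<sigma> \<tau>. pact m \<sigma> (F \<tau>) = F (tact m \<sigma> \<tau>)"
  shows "(\<Union>\<rho>\<in>GR m. \<Union>\<tau>\<in>Tri. {\<rho> (F \<tau>)}) = F ` tri_orbit m Tri"
proof -
  have "(\<Union>\<rho>\<in>GR m. \<Union>\<tau>\<in>Tri. {\<rho> (F \<tau>)}) = (\<Union>\<sigma>. \<Union>\<tau>\<in>Tri. {F (tact m \<sigma> \<tau>)})"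
    unfolding GR_eq_range_pact by (simp add: assms)
  also have "\<dots> = F ` tri_orbit m Tri"
    unfolding tri_orbit_def by blast
  finally show ?thesis .
qed

context beta_lines
begin

lemma triWitness_iff:
  "triWitness m k c x y z Tri \<longleftrightarrow> finite Tri \<and> card Tri = k \<and>
     x = cornerAB c ` tri_orbit m Tri \<and> y = cornerBG c ` tri_orbit m Tri \<and> z = cornerAG ` tri_orbit m Tri"
  unfolding triWitness_def
  by (simp add: GR_images_eq_tri_orbit cornerAB_tact cornerBG_tact cornerAG_tact eq_commute)

context
  fixes k f g h Tri
  assumes witness: "triWitness m k c (liftAB c f) (liftBG c g) (liftAG h) Tri"
begin

lemma triWitness_tri_orbit_mem:
  assumes "(s, t, u) \<in> tri_orbit m Tri"
  shows "f s = Some t" and "g t = Some u" and "h s = Some u"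
  using witness assms unfolding triWitness_iff
  by (auto simp flip: cornerAB_mem_liftAB_iff[of s t u] cornerBG_mem_liftBG_iff[of s t u]
      cornerAG_mem_liftAG_iff[of s t u])

lemma triWitness_AB:
  assumes "f s = Some t" obtains u where "(s, t, u) \<in> tri_orbit m Tri"
proof -
  have "cornerAB c (s, t, 0) \<in> liftAB c f"
    using assms by (simp add: cornerAB_mem_liftAB_iff)
  then have "cornerAB c (s, t, 0) \<in> cornerAB c ` tri_orbit m Tri"
    using witness unfolding triWitness_iff by simp
  then show ?thesis using that by (auto simp: cornerAB_eq_iff)
qed

lemma triWitness_BG:
  assumes "g t = Some u" obtains s where "(s, t, u) \<in> tri_orbit m Tri"
proof -
  have "cornerBG c (0, t, u) \<in> liftBG c g"
    using assms by (simp add: cornerBG_mem_liftBG_iff)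
  then have "cornerBG c (0, t, u) \<in> cornerBG c ` tri_orbit m Tri"
    using witness unfolding triWitness_iff by simp
  then show ?thesis using that by (auto simp: cornerBG_eq_iff)
qed

lemma triWitness_AG:
  assumes "h s = Some u" obtains t where "(s, t, u) \<in> tri_orbit m Tri"
proof -
  have "cornerAG (s, 0, u) \<in> liftAG h"
    using assms by (simp add: cornerAG_mem_liftAG_iff)
  then have "cornerAG (s, 0, u) \<in> cornerAG ` tri_orbit m Tri"
    using witness unfolding triWitness_iff by simp
  then show ?thesis using that by (auto simp: cornerAG_eq_iff)
qed

lemma triWitness_composable: "dom g = ran f" and triWitness_comp: "h = g \<circ>\<^sub>m f"
proof -
  show "dom g = ran f"
  proof
    show "dom g \<subseteq> ran f"
      by (auto simp: ran_def elim!: triWitness_BG dest: triWitness_tri_orbit_mem)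
    show "ran f \<subseteq> dom g"
      by (auto simp: ran_def elim!: triWitness_AB dest: triWitness_tri_orbit_mem)
  qed
  show "h = g \<circ>\<^sub>m f"
  proof (rule map_eqI_Some)
    fix s u
    show "h s = Some u \<longleftrightarrow> (g \<circ>\<^sub>m f) s = Some u"
    proof
      assume "h s = Some u"
      then obtain t where "(s, t, u) \<in> tri_orbit m Tri" by (rule triWitness_AG)
      then show "(g \<circ>\<^sub>m f) s = Some u" by (simp add: triWitness_tri_orbit_mem)
    next
      assume "(g \<circ>\<^sub>m f) s = Some u"
      then obtain t where t: "f s = Some t" "g t = Some u" by (auto simp: map_comp_Some_iff)
      then obtain u' where "(s, t, u') \<in> tri_orbit m Tri" by (elim triWitness_AB)
      then show "h s = Some u" using t(2) triWitness_tri_orbit_mem by fastforce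
    qed
  qed
qed

end

end

section \<open>Composable pairs\<close>

lemma crosses_add:
  "of_bool (crosses j x y) + of_bool (crosses j y z) =
     of_bool (crosses j x z) + 2 * (of_bool ((x < j \<and> z < j \<and> j \<le> y) \<or> (j \<le> x \<and> j \<le> z \<and> y < j)) :: nat)"
  by (auto simp: crosses_def)

lemma card_add_eq_if_of_bool_add_eq:
  assumes "finite F"
    and "\<And>x. x \<in> F \<Longrightarrow> of_bool (P x) + of_bool (Q x) = of_bool (R x) + 2 * (of_bool (S x) :: nat)"
  shows "card {x \<in> F. P x} + card {x \<in> F. Q x} = card {x \<in> F. R x} + 2 * card {x \<in> F. S x}"
proof -
  have "(\<Sum>x\<in>F. of_bool (P x) + of_bool (Q x)) = (\<Sum>x\<in>F. of_bool (R x) + 2 * (of_bool (S x) :: nat))"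
    using assms(2) by (rule sum.cong[OF refl])
  then show ?thesis
    using assms(1) by (simp add: sum.distrib sum_distrib_left[symmetric] Int_def)
qed

definition tri :: "(int \<Rightarrow> int option) \<Rightarrow> (int \<Rightarrow> int option) \<Rightarrow> int \<Rightarrow> int \<times> int \<times> int" where
  "tri f g s = (s, the (f s), the (g (the (f s))))"

lemma inj_tri: "inj (tri f g)"
  by (rule injI) (simp add: tri_def)

locale composable_lpps = beta_lines +
  fixes k :: nat and f g :: "int \<Rightarrow> int option"
  assumes m_ge_2: "2 \<le> m" and k_pos: "0 < k" and LPP_f: "LPP m k f" and LPP_g: "LPP m k g"
    and dom_g: "dom g = ran f"
begin

lemma dom_g_eq_image: "dom g = (\<lambda>s. the (f s)) ` dom f"
  using dom_g by (force simp: ran_def)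

lemma map_comp_eq: "s \<in> dom f \<Longrightarrow> (g \<circ>\<^sub>m f) s = g (the (f s))"
  by (auto simp: map_comp_def)

lemma dom_map_comp: "dom (g \<circ>\<^sub>m f) = dom f"
proof
  show "dom (g \<circ>\<^sub>m f) \<subseteq> dom f" by (auto simp: map_comp_def split: option.splits)
  show "dom f \<subseteq> dom (g \<circ>\<^sub>m f)"
  proof
    fix s assume "s \<in> dom f"
    then have "the (f s) \<in> dom g" using dom_g_eq_image by blast
    then show "s \<in> dom (g \<circ>\<^sub>m f)" using map_comp_eq[OF \<open>s \<in> dom f\<close>] by auto
  qed
qed

lemma tact_tri: "s \<in> dom f \<Longrightarrow> tact m \<sigma> (tri f g s) = tri f g (gact m \<sigma> s)"
  using LPP_gact[OF LPP_f] LPP_gact[OF LPP_g] dom_g_eq_image by (simp add: tri_def)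

lemma lifts_eq_tri_corners:
  "liftAB c f = cornerAB c ` tri f g ` dom f"
  "liftBG c g = cornerBG c ` tri f g ` dom f"
  "liftAG (g \<circ>\<^sub>m f) = cornerAG ` tri f g ` dom f"
proof -
  show "liftAB c f = cornerAB c ` tri f g ` dom f"
    by (simp add: liftAB_eq image_image tri_def cornerAB_def)
  show "liftBG c g = cornerBG c ` tri f g ` dom f"
    by (simp add: liftBG_eq dom_g_eq_image image_image tri_def cornerBG_def)
  show "liftAG (g \<circ>\<^sub>m f) = cornerAG ` tri f g ` dom f"
    unfolding liftAG_eq dom_map_comp image_image
    by (rule image_cong) (simp_all add: map_comp_eq tri_def cornerAG_def)
qed

lemma tri_orbit_tri_image:
  assumes "orbit_transversal m R (dom f)"
  shows "tri_orbit m (tri f g ` R) = tri f g ` dom f"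
proof
  have "R \<subseteq> dom f" using assms by (simp add: orbit_transversal_def)
  show "tri_orbit m (tri f g ` R) \<subseteq> tri f g ` dom f"
  proof
    fix \<tau> assume "\<tau> \<in> tri_orbit m (tri f g ` R)"
    then obtain \<sigma> r where "r \<in> R" "\<tau> = tact m \<sigma> (tri f g r)" by (auto simp: tri_orbit_def)
    moreover from \<open>r \<in> R\<close> have "r \<in> dom f" using \<open>R \<subseteq> dom f\<close> by blast
    ultimately have "\<tau> = tri f g (gact m \<sigma> r)" and "gact m \<sigma> r \<in> dom f"
      using tact_tri LPP_gact_mem_dom[OF LPP_f] by simp_all
    then show "\<tau> \<in> tri f g ` dom f" by blast
  qed
  show "tri f g ` dom f \<subseteq> tri_orbit m (tri f g ` R)"
  proof
    fix \<tau> assume "\<tau> \<in> tri f g ` dom f"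
    then obtain s where "s \<in> dom f" "\<tau> = tri f g s" by blast
    then obtain \<sigma> r where "r \<in> R" "\<tau> = tri f g (gact m \<sigma> r)"
      using orbit_transversal_cover[OF assms] by metis
    moreover have "r \<in> dom f" using \<open>r \<in> R\<close> \<open>R \<subseteq> dom f\<close> by blast
    ultimately have "\<tau> = tact m \<sigma> (tri f g r)" using tact_tri by simp
    then show "\<tau> \<in> tri_orbit m (tri f g ` R)"
      using \<open>r \<in> R\<close> unfolding tri_orbit_def by blast
  qed
qed

lemma triConnected_lifts: "triConnected m k c (liftAB c f) (liftBG c g) (liftAG (g \<circ>\<^sub>m f))"
proof -
  obtain R where R: "orbit_transversal m R (dom f)" using orbit_transversal_exists by blast
  have "triWitness m k c (liftAB c f) (liftBG c g) (liftAG (g \<circ>\<^sub>m f)) (tri f g ` R)"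
    unfolding triWitness_iff tri_orbit_tri_image[OF R] lifts_eq_tri_corners
    using LPP_transversal_finite[OF LPP_f k_pos R] by (simp add: card_image inj_on_subset[OF inj_tri])
  then show ?thesis unfolding triConnected_def by blast
qed

end

context composable_lpps
begin

lemma wt_g_eq: "wt j g = real (card {s \<in> dom f. crosses j (the (f s)) (the (g (the (f s))))}) / 2"
proof -
  have "{t \<in> dom g. crosses j t (the (g t))} =
      (\<lambda>s. the (f s)) ` {s \<in> dom f. crosses j (the (f s)) (the (g (the (f s))))}"
    unfolding dom_g_eq_image by auto
  moreover have "inj_on (\<lambda>s. the (f s)) {s \<in> dom f. crosses j (the (f s)) (the (g (the (f s))))}"
    using LPP_inj_on[OF m_ge_2 LPP_f] by (rule inj_on_subset) auto
  ultimately show ?thesis by (simp add: wt_eq_card_crosses card_image)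
qed

lemma wt_map_comp_eq: "wt j (g \<circ>\<^sub>m f) = real (card {s \<in> dom f. crosses j s (the (g (the (f s))))}) / 2"
proof -
  have "{s \<in> dom (g \<circ>\<^sub>m f). crosses j s (the ((g \<circ>\<^sub>m f) s))} = {s \<in> dom f. crosses j s (the (g (the (f s))))}"
    unfolding dom_map_comp using map_comp_eq by auto
  then show ?thesis by (simp add: wt_eq_card_crosses)
qed

lemma finite_crossings_f_or_g:
  "finite {s \<in> dom f. crosses j s (the (f s)) \<or> crosses j (the (f s)) (the (g (the (f s))))}"
proof -
  let ?B = "{s \<in> dom f. crosses j (the (f s)) (the (g (the (f s))))}"
  have "(\<lambda>s. the (f s)) ` ?B = {t \<in> dom g. crosses j t (the (g t))}"
    unfolding dom_g_eq_image by auto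
  then have "finite ?B"
    using LPP_finite_crossings[OF LPP_g k_pos] LPP_inj_on[OF m_ge_2 LPP_f]
    by (metis (no_types, lifting) finite_imageD inj_on_subset mem_Collect_eq subsetI)
  moreover have "finite {s \<in> dom f. crosses j s (the (f s))}"
    using LPP_finite_crossings[OF LPP_f k_pos] .
  ultimately show ?thesis by (simp add: Collect_conj_eq Collect_disj_eq Int_Un_distrib)
qed

lemma wt_add_eq_card_diag:
  "wt j f + wt j g = wt j (g \<circ>\<^sub>m f)
     + real (card {s \<in> dom f. (real_of_int j - 1/2, real_of_int j - 1/2) \<in> triRegion c (tri f g s)})"
proof -
  let ?F = "{s \<in> dom f. crosses j s (the (f s)) \<or> crosses j (the (f s)) (the (g (the (f s))))}"
  let ?a = "\<lambda>s. crosses j s (the (f s))" and ?b = "\<lambda>s. crosses j (the (f s)) (the (g (the (f s))))"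
  let ?e = "\<lambda>s. crosses j s (the (g (the (f s))))"
    and ?n = "\<lambda>s. (real_of_int j - 1/2, real_of_int j - 1/2) \<in> triRegion c (tri f g s)"
  have pointwise: "of_bool (?a s) + of_bool (?b s) = of_bool (?e s) + 2 * (of_bool (?n s) :: nat)" for s
    unfolding tri_def diag_mem_triRegion_iff by (rule crosses_add)
  have "?e s \<Longrightarrow> ?a s \<or> ?b s" and "?n s \<Longrightarrow> ?a s \<or> ?b s" for s
    unfolding tri_def diag_mem_triRegion_iff crosses_def by auto
  then have restrict: "{s \<in> ?F. ?a s} = {s \<in> dom f. ?a s}" "{s \<in> ?F. ?b s} = {s \<in> dom f. ?b s}"
    "{s \<in> ?F. ?e s} = {s \<in> dom f. ?e s}" "{s \<in> ?F. ?n s} = {s \<in> dom f. ?n s}"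
    by blast+
  have "card {s \<in> ?F. ?a s} + card {s \<in> ?F. ?b s} = card {s \<in> ?F. ?e s} + 2 * card {s \<in> ?F. ?n s}"
    using finite_crossings_f_or_g pointwise by (rule card_add_eq_if_of_bool_add_eq)
  then show ?thesis
    unfolding wt_eq_card_crosses[of j f] wt_g_eq wt_map_comp_eq restrict
    by (simp add: field_simps flip: of_nat_add of_nat_mult)
qed

context
  fixes Tri
  assumes witness: "triWitness m k c (liftAB c f) (liftBG c g) (liftAG (g \<circ>\<^sub>m f)) Tri"
begin

lemma witness_tri: "\<tau> \<in> Tri \<Longrightarrow> fst \<tau> \<in> dom f \<and> \<tau> = tri f g (fst \<tau>)"
  using tri_orbit_subset triWitness_tri_orbit_mem[OF witness] by (cases \<tau>) (fastforce simp: tri_def)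

lemma witness_eq_tri_image: "Tri = tri f g ` fst ` Tri"
proof
  show "Tri \<subseteq> tri f g ` fst ` Tri" using witness_tri by (metis image_eqI subsetI)
  show "tri f g ` fst ` Tri \<subseteq> Tri"
  proof
    fix x assume "x \<in> tri f g ` fst ` Tri"
    then obtain \<tau> where "\<tau> \<in> Tri" "x = tri f g (fst \<tau>)" by blast
    then show "x \<in> Tri" using witness_tri by metis
  qed
qed

lemma orbit_transversal_witness: "orbit_transversal m (fst ` Tri) (dom f)"
proof (rule orbit_transversalI)
  show "fst ` Tri \<subseteq> dom f" using witness_tri by blast
  have "finite Tri" "card Tri = k" using witness by (simp_all add: triWitness_iff)
  moreover have "inj_on fst Tri" using witness_tri by (metis inj_onI)
  ultimately show "finite (fst ` Tri)" "card (fst ` Tri) = card (Gorbit m ` dom f)"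
    using LPP_card_orbits[OF LPP_f] by (simp_all add: card_image)
  show "\<exists>\<sigma>. \<exists>r\<in>fst ` Tri. s = gact m \<sigma> r" if "s \<in> dom f" for s
  proof -
    have "f s = Some (the (f s))" using \<open>s \<in> dom f\<close> by auto
    then obtain u where "(s, the (f s), u) \<in> tri_orbit m Tri" by (rule triWitness_AB[OF witness])
    then obtain \<sigma> \<tau> where "\<tau> \<in> Tri" "(s, the (f s), u) = tact m \<sigma> \<tau>" by (auto simp: tri_orbit_def)
    moreover obtain a b u' where "\<tau> = (a, b, u')" by (cases \<tau>)
    ultimately have "a \<in> fst ` Tri" "s = gact m \<sigma> a" by force+
    then show ?thesis by blast
  qed
qed

text \<open>Each orbit of triangles contributes to \<open>n\<^sub>O\<^sub>j\<close> once for every member containing the lift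
  \<open>(j - 1/2, j - 1/2)\<close>, and the members of all orbits together are the triangles of \<open>tri f g\<close>.\<close>
lemma multO_eq_card_diag:
  "multO m c Tri i = card {s \<in> dom f. (real i - 1/2, real i - 1/2) \<in> triRegion c (tri f g s)}"
proof -
  let ?P = "\<lambda>s. (real i - 1/2, real i - 1/2) \<in> triRegion c (tri f g s)"
  let ?R = "fst ` Tri"
  have R: "?R \<subseteq> dom f" "finite ?R" using orbit_transversal_witness
    by (auto simp: orbit_transversal_def LPP_transversal_finite[OF LPP_f k_pos])
  have fin: "finite {s \<in> dom f. ?P s}"
    by (rule finite_subset[OF _ finite_crossings_f_or_g[of "int i"]])
      (auto simp: tri_def diag_mem_triRegion_iff[of "int i", simplified] crosses_def)
  have per_orbit: "card {\<rho> \<in> GR m. (real i - 1/2, real i - 1/2) \<in> \<rho> ` triRegion c (tri f g r)}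
      = card {\<sigma>. ?P (gact m \<sigma> r)}" if "r \<in> ?R" for r
  proof -
    have tri_image: "pact m \<sigma> ` triRegion c (tri f g r) = triRegion c (tri f g (gact m \<sigma> r))" for \<sigma>
      using R(1) that by (simp add: triRegion_tact tact_tri subset_iff)
    have range_filter: "{\<rho> \<in> range (pact m). p \<in> \<rho> ` T} = pact m ` {\<sigma>. p \<in> pact m \<sigma> ` T}" for p T
      by blast
    have "{\<rho> \<in> GR m. (real i - 1/2, real i - 1/2) \<in> \<rho> ` triRegion c (tri f g r)}
        = pact m ` {\<sigma>. ?P (gact m \<sigma> r)}"
      by (simp only: GR_eq_range_pact range_filter tri_image)
    then show ?thesis by (simp add: card_image inj_on_subset[OF inj_pact[OF m_ge_2]])
  qed
  have "multO m c Tri i =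
      (\<Sum>\<tau>\<in>tri f g ` ?R. card {\<rho> \<in> GR m. (real i - 1/2, real i - 1/2) \<in> \<rho> ` triRegion c \<tau>})"
    unfolding multO_def by (rule sum.cong[OF witness_eq_tri_image refl])
  also have "\<dots> = (\<Sum>r\<in>?R. card {\<sigma>. ?P (gact m \<sigma> r)})"
    by (simp add: sum.reindex inj_on_subset[OF inj_tri] per_orbit)
  also have "\<dots> = card {s \<in> dom f. ?P s}"
    using card_filter_eq_sum_transversal[OF m_ge_2 orbit_transversal_witness
        LPP_gact_mem_dom[OF LPP_f] R(2) fin] by simp
  finally show ?thesis .
qed

lemma wt_add_eq_multO: "wt (int i) f + wt (int i) g = wt (int i) (g \<circ>\<^sub>m f) + real (multO m c Tri i)"
  using wt_add_eq_card_diag[of "int i"] by (simp add: multO_eq_card_diag)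

end

end

context beta_lines
begin

lemma composable_lppsI:
  "2 \<le> m \<Longrightarrow> 0 < k \<Longrightarrow> LPP m k f \<Longrightarrow> LPP m k g \<Longrightarrow> dom g = ran f \<Longrightarrow> composable_lpps m c k f g"
  using beta_lines_axioms by (simp add: composable_lpps_def composable_lpps_axioms_def)

lemma inj_on_lift_triples: "inj_on (\<lambda>(f, g). (liftAB c f, liftBG c g, liftAG (g \<circ>\<^sub>m f))) A"
proof (rule inj_onI)
  fix p q assume "(\<lambda>(f, g). (liftAB c f, liftBG c g, liftAG (g \<circ>\<^sub>m f))) p =
    (\<lambda>(f, g). (liftAB c f, liftBG c g, liftAG (g \<circ>\<^sub>m f))) q"
  moreover obtain f g f' g' where "p = (f, g)" "q = (f', g')" by fastforce
  ultimately show "p = q" using inj_liftAB inj_liftBG by (simp add: inj_eq)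
qed

lemma triConnected_lifts_imp_composable:
  assumes "triConnected m k c (liftAB c f) (liftBG c g) (liftAG h)"
  shows "dom g = ran f" and "h = g \<circ>\<^sub>m f"
  using assms triWitness_composable triWitness_comp unfolding triConnected_def by blast+

lemma lift_triples_image:
  assumes "2 \<le> m" and "0 < k"
  shows "(\<lambda>(f, g). (liftAB c f, liftBG c g, liftAG (g \<circ>\<^sub>m f))) `
      {(f, g). LPP m k f \<and> LPP m k g \<and> dom g = ran f \<and> LPP m k (g \<circ>\<^sub>m f)} =
      {(x, y, z). x \<in> statesAB m k c \<and> y \<in> statesBG m k c \<and> z \<in> statesAG m k \<and> triConnected m k c x y z}"
    (is "?image = ?states")
proof (intro equalityI subsetI)
  fix w assume "w \<in> ?image"
  then obtain f g where fg: "LPP m k f" "LPP m k g" "dom g = ran f" "LPP m k (g \<circ>\<^sub>m f)"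
    and w: "w = (liftAB c f, liftBG c g, liftAG (g \<circ>\<^sub>m f))" by auto
  then show "w \<in> ?states"
    using composable_lpps.triConnected_lifts[OF composable_lppsI[OF assms fg(1-3)]]
    by (auto simp: statesAB_def statesBG_def statesAG_def)
next
  fix w assume "w \<in> ?states"
  then obtain f g h where "LPP m k f" "LPP m k g" "LPP m k h"
    and w: "w = (liftAB c f, liftBG c g, liftAG h)"
    and tc: "triConnected m k c (liftAB c f) (liftBG c g) (liftAG h)"
    by (auto simp: statesAB_def statesBG_def statesAG_def)
  then show "w \<in> ?image"
    using triConnected_lifts_imp_composable[OF tc] by auto
qed

end

theorem mainTheorem8:
  fixes m k :: nat and c :: "int \<Rightarrow> real"
  assumes "0 < k" and "k < m"
    and beta_diag: "\<forall>l. 2 * real_of_int l - 1 < c l \<and> c l < 2 * real_of_int l + 1"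
    and beta_generic: "\<forall>s l. c l \<noteq> 2 * real_of_int s"
    and beta_inv: "\<forall>\<rho>\<in>GR m. \<forall>l. \<exists>l'. \<rho> ` betaL c l = betaL c l'"
  shows "bij_betw (\<lambda>(f, g). (liftAB c f, liftBG c g, liftAG (g \<circ>\<^sub>m f)))
           {(f, g). LPP m k f \<and> LPP m k g \<and> dom g = ran f \<and> LPP m k (g \<circ>\<^sub>m f)}
           {(x, y, z). x \<in> statesAB m k c \<and> y \<in> statesBG m k c \<and> z \<in> statesAG m k \<and>
                       triConnected m k c x y z}
    \<and> (\<forall>f g Tri. LPP m k f \<and> LPP m k g \<and> dom g = ran f \<and> LPP m k (g \<circ>\<^sub>m f) \<and>
          triWitness m k c (liftAB c f) (liftBG c g) (liftAG (g \<circ>\<^sub>m f)) Tri \<longrightarrow>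
          (\<forall>i\<in>{1..m}. wt (int i) f + wt (int i) g
                        = wt (int i) (g \<circ>\<^sub>m f) + real (multO m c Tri i)))"
proof -
  interpret beta_lines m c using beta_diag beta_generic beta_inv by unfold_locales
  have "2 \<le> m" using assms(1,2) by simp
  have "bij_betw (\<lambda>(f, g). (liftAB c f, liftBG c g, liftAG (g \<circ>\<^sub>m f)))
      {(f, g). LPP m k f \<and> LPP m k g \<and> dom g = ran f \<and> LPP m k (g \<circ>\<^sub>m f)}
      {(x, y, z). x \<in> statesAB m k c \<and> y \<in> statesBG m k c \<and> z \<in> statesAG m k \<and> triConnected m k c x y z}"
    using inj_on_lift_triples lift_triples_image[OF \<open>2 \<le> m\<close> assms(1)] by (simp add: bij_betw_def)
  moreover have "wt (int i) f + wt (int i) g = wt (int i) (g \<circ>\<^sub>m f) + real (multO m c Tri i)"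
    if "LPP m k f" "LPP m k g" "dom g = ran f"
      and "triWitness m k c (liftAB c f) (liftBG c g) (liftAG (g \<circ>\<^sub>m f)) Tri" for f g Tri i
    using composable_lpps.wt_add_eq_multO[OF composable_lppsI[OF \<open>2 \<le> m\<close> assms(1) that(1-3)] that(4)] .
  ultimately show ?thesis by blast
qed

end
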